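(* Fix $b\in\mathbb{N}$ and let $S$ be a subset of $\mathbb{N}$. Then \[ \lim_{N\to\infty}\frac{|\{(r,s)\in\mathbb{N}\times\mathbb{N} : 0<r,s\le N,\ \gcd_b(r,s)\in S\}|}{N^2}=\frac{\zeta_S(b+1)}{\zeta(b+1)}, \] where $\zeta_S(b+1)=\sum_{k\in S}k^{-(b+1)}$ and $\zeta$ is the Riemann zeta function.
   Context: For $b\in\mathbb{N}$ and $r,s\in\mathbb{N}$, $\gcd_b(r,s)=\max\{k\in\mathbb{N} : k\mid r \text{ and } k^b\mid s\}$. *)

theory Defs
  imports "HOL-Analysis.Analysis"
begin

definition gcd_b :: "nat \<Rightarrow> nat \<Rightarrow> nat \<Rightarrow> nat" where
  "gcd_b b r s = Max {k. k dvd r \<and> k ^ b dvd s}"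

definition zeta_nat :: "nat \<Rightarrow> real" where
  "zeta_nat m = (\<Sum>n. 1 / real (Suc n) ^ m)"

definition zeta_S :: "nat set \<Rightarrow> nat \<Rightarrow> real" where
  "zeta_S S m = infsum (\<lambda>k. 1 / real k ^ m) S"

end

theory Submission
  imports Defs "HOL-Computational_Algebra.Squarefree"
begin

(* Since j divides gcd_b(r, s) exactly when j | r and j^b | s, Moebius inversion over the
   multiples j k of k expresses the number of pairs in [1, N]^2 with gcd_b(r, s) = k as
   sum_j mu(j) floor(N / jk) floor(N / (jk)^b), where the j-th term is about mu(j) N^2 / (jk)^(b+1).
   Tannery's theorem (dominated convergence for series) turns this into the density
   c / k^(b+1) with c = sum_j mu(j) / j^(b+1); a second application sums the densities over
   k in S to c zeta_S(b+1). When S contains every positive integer the density is 1, which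
   identifies c = 1 / zeta(b+1). *)

section \<open>The Moebius function\<close>

definition moebius_mu :: "nat \<Rightarrow> real" where
  "moebius_mu n = (if squarefree n then (-1) ^ card (prime_factors n) else 0)"

lemma abs_moebius_mu_le: "\<bar>moebius_mu n\<bar> \<le> 1"
  by (simp add: moebius_mu_def)

lemma squarefree_eq_prod_prime_factors:
  fixes n :: nat
  assumes "squarefree n"
  shows "n = \<Prod>(prime_factors n)"
proof -
  have "n \<noteq> 0" using assms by (metis not_squarefree_0)
  then have "n = (\<Prod>p\<in>prime_factors n. p ^ multiplicity p n)"
    by (simp add: prod_prime_factors)
  also have "\<dots> = \<Prod>(prime_factors n)"
    using assms \<open>n \<noteq> 0\<close> by (intro prod.cong) (auto simp: squarefree_factorial_semiring')
  finally show ?thesis .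
qed

lemma
  fixes T :: "nat set"
  assumes "finite T" "\<And>p. p \<in> T \<Longrightarrow> prime p"
  shows prime_factors_prod_primes: "prime_factors (\<Prod>T) = T"
    and squarefree_prod_primes: "squarefree (\<Prod>T)"
proof -
  have "0 \<notin> T" using assms(2) not_prime_0 by blast
  then show pf: "prime_factors (\<Prod>T) = T"
    using prime_factors_prod[OF assms(1), of id] assms(2) by (auto simp: prime_prime_factors)
  have "multiplicity p (\<Prod>T) = 1" if "p \<in> T" for p
    using multiplicity_prod_prime_powers[OF assms(1), of p "\<lambda>_. 1"] assms that by simp
  moreover have "\<Prod>T \<noteq> 0" using \<open>0 \<notin> T\<close> assms(1) by simp
  ultimately show "squarefree (\<Prod>T)" by (simp add: squarefree_factorial_semiring' pf)
qed

lemma squarefree_divisors_eq_image_Prod: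
  fixes n :: nat
  assumes "n > 0"
  shows "{d. d dvd n \<and> squarefree d} = Prod ` Pow (prime_factors n)"
proof (intro equalityI subsetI)
  fix d assume "d \<in> {d. d dvd n \<and> squarefree d}"
  then have "d dvd n" "squarefree d" by auto
  moreover have "prime_factors d \<subseteq> prime_factors n"
    using \<open>d dvd n\<close> assms by (intro dvd_prime_factors) auto
  ultimately show "d \<in> Prod ` Pow (prime_factors n)"
    using squarefree_eq_prod_prime_factors by blast
next
  fix d assume "d \<in> Prod ` Pow (prime_factors n)"
  then obtain T where T: "T \<subseteq> prime_factors n" and d: "d = \<Prod>T" by auto
  have "finite T" using T finite_subset by blast
  have "\<Prod>T dvd \<Prod>(prime_factors n)"
    using T by (intro prod_dvd_prod_subset) auto
  also have "\<dots> dvd (\<Prod>p\<in>prime_factors n. p ^ multiplicity p n)"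
    by (intro prod_dvd_prod) (simp add: prime_factors_multiplicity)
  also have "\<dots> = n" using assms by (simp add: prod_prime_factors)
  finally show "d \<in> {d. d dvd n \<and> squarefree d}"
    using squarefree_prod_primes[OF \<open>finite T\<close>] T d by auto
qed

lemma sum_moebius_mu_divisors:
  assumes "n > 0"
  shows "(\<Sum>d | d dvd n. moebius_mu d) = (if n = 1 then 1 else 0)"
proof -
  define P where "P = prime_factors n"
  have primes: "finite T" "\<And>p. p \<in> T \<Longrightarrow> prime p" if "T \<subseteq> P" for T
    using that finite_subset unfolding P_def by auto
  have "inj_on Prod (Pow P)"
    by (rule inj_onI) (metis PowD primes prime_factors_prod_primes)
  have "(\<Sum>d | d dvd n. moebius_mu d) = (\<Sum>d \<in> {d. d dvd n \<and> squarefree d}. moebius_mu d)"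
    using assms by (intro sum.mono_neutral_right) (auto simp: moebius_mu_def)
  also have "\<dots> = (\<Sum>T\<in>Pow P. moebius_mu (\<Prod>T))"
    using \<open>inj_on Prod (Pow P)\<close> assms
    by (simp add: squarefree_divisors_eq_image_Prod P_def sum.reindex)
  also have "\<dots> = (\<Sum>T\<in>Pow P. (-1) ^ card T)"
    using primes by (intro sum.cong refl)
      (simp add: moebius_mu_def squarefree_prod_primes prime_factors_prod_primes)
  also have "\<dots> = (\<Prod>p\<in>P. 1 - 1)"
    using prod_diff_conv_sum[of P "\<lambda>_. (1::real)" "\<lambda>_. 1"] by (simp add: P_def)
  also have "\<dots> = (if n = 1 then 1 else 0)"
    using assms by (auto simp: P_def card_gt_0_iff prime_factorization_empty_iff)
  finally show ?thesis .
qed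

lemma sum_moebius_mu_dvd_quotient:
  assumes "g > 0"
  shows "(\<Sum>j | j * k dvd g. moebius_mu j) = (if g = k then 1 else 0)"
proof (cases "k dvd g")
  case True
  then obtain q where q: "g = k * q" by blast
  then have "{j. j * k dvd g} = {j. j dvd q}"
    using assms by (auto simp: mult.commute)
  then show ?thesis
    using q assms sum_moebius_mu_divisors[of q] by auto
next
  case False
  then have "{j. j * k dvd g} = {}" by (auto dest: dvd_mult_right)
  then show ?thesis using False by auto
qed

lemma sum_moebius_mu_dvd_quotient_atLeastAtMost:
  assumes "0 < g" "g \<le> N"
  shows "(\<Sum>j=1..N. moebius_mu j * of_bool (j * k dvd g)) = of_bool (g = k)"
proof -
  have "{j. j * k dvd g} \<subseteq> {1..N}"
  proof
    fix j assume "j \<in> {j. j * k dvd g}"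
    then have "j dvd g" by (auto intro: dvd_mult_left)
    then show "j \<in> {1..N}"
      using assms dvd_imp_le[of j g] by (auto intro: Nat.gr0I)
  qed
  then have "{1..N} \<inter> {j. j * k dvd g} = {j. j * k dvd g}" by blast
  then show ?thesis
    using sum_moebius_mu_dvd_quotient[OF assms(1), of k] by simp
qed

section \<open>Divisors of gcd_b\<close>

lemma lcm_power_nat: "lcm (a ^ n) (c ^ n) = lcm a c ^ n" for a c :: nat
proof (cases "a = 0 \<or> c = 0")
  case True
  then show ?thesis by (cases n) auto
next
  case False
  have "lcm (a ^ n) (c ^ n) * gcd (a ^ n) (c ^ n) = lcm a c ^ n * gcd a c ^ n"
    by (metis power_mult_distrib prod_gcd_lcm_nat mult.commute)
  then show ?thesis
    using False by simp
qed

lemma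
  assumes "r > 0"
  shows gcd_b_dvd: "gcd_b b r s dvd r" "gcd_b b r s ^ b dvd s"
    and dvd_gcd_b_iff: "d dvd gcd_b b r s \<longleftrightarrow> d dvd r \<and> d ^ b dvd s"
proof -
  define K where "K = {k. k dvd r \<and> k ^ b dvd s}"
  have "finite K"
    using assms by (intro finite_subset[of K "{..r}"]) (auto simp: K_def dvd_imp_le)
  moreover have "1 \<in> K" by (simp add: K_def)
  ultimately have "gcd_b b r s \<in> K" and Max_ge: "\<And>k. k \<in> K \<Longrightarrow> k \<le> gcd_b b r s"
    unfolding gcd_b_def K_def[symmetric] by (auto intro: Max_in)
  then show g_dvd: "gcd_b b r s dvd r" "gcd_b b r s ^ b dvd s" by (auto simp: K_def)
  have "d dvd gcd_b b r s" if "d dvd r" "d ^ b dvd s"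
  proof -
    \<comment> \<open>the admissible divisors are closed under lcm, so the largest one is a multiple
      of all of them\<close>
    let ?l = "lcm d (gcd_b b r s)"
    have "?l \<in> K" using that g_dvd by (simp add: K_def flip: lcm_power_nat)
    then have "?l \<le> gcd_b b r s" by (rule Max_ge)
    moreover have "gcd_b b r s \<le> ?l"
      using \<open>?l \<in> K\<close> assms by (intro dvd_imp_le) (auto simp: K_def dvd_pos_nat)
    ultimately show ?thesis by (metis dvd_lcm1 order_antisym)
  qed
  then show "d dvd gcd_b b r s \<longleftrightarrow> d dvd r \<and> d ^ b dvd s"
    using g_dvd by (meson dvd_power_same dvd_trans)
qed

lemma gcd_b_pos: "r > 0 \<Longrightarrow> gcd_b b r s > 0"
  using gcd_b_dvd(1)[of r b s] by (auto intro: Nat.gr0I)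

lemma gcd_b_le: "r > 0 \<Longrightarrow> gcd_b b r s \<le> r"
  using gcd_b_dvd(1)[of r b s] by (simp add: dvd_imp_le)

section \<open>Counting pairs by the value of gcd_b\<close>

definition gcd_b_pairs :: "nat \<Rightarrow> nat \<Rightarrow> nat set \<Rightarrow> (nat \<times> nat) set" where
  "gcd_b_pairs b N A = {(r, s). 0 < r \<and> r \<le> N \<and> 0 < s \<and> s \<le> N \<and> gcd_b b r s \<in> A}"

lemma card_gcd_b_pairs_UNIV: "card (gcd_b_pairs b N UNIV) = N ^ 2"
proof -
  have "gcd_b_pairs b N UNIV = {1..N} \<times> {1..N}"
    by (auto simp: gcd_b_pairs_def)
  then show ?thesis by (simp add: card_cartesian_product power2_eq_square)
qed

lemma gcd_b_pairs_eq_filter: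
  "gcd_b_pairs b N A = {(r, s) \<in> gcd_b_pairs b N UNIV. gcd_b b r s \<in> A}"
  by (auto simp: gcd_b_pairs_def)

lemma finite_gcd_b_pairs [simp]: "finite (gcd_b_pairs b N A)"
  by (rule finite_subset[of _ "{1..N} \<times> {1..N}"]) (auto simp: gcd_b_pairs_def)

lemma gcd_b_pairs_0: "gcd_b_pairs b N {0} = {}"
  unfolding gcd_b_pairs_def using gcd_b_pos[of _ b] by (auto simp flip: neq0_conv)

lemma card_gcd_b_pairs_eq_sum:
  "card (gcd_b_pairs b N A) = (\<Sum>k\<in>A \<inter> {..N}. card (gcd_b_pairs b N {k}))"
proof -
  have "gcd_b_pairs b N A = (\<Union>k\<in>A \<inter> {..N}. gcd_b_pairs b N {k})"
    by (auto simp: gcd_b_pairs_def intro: order.trans[OF gcd_b_le])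
  moreover have "gcd_b_pairs b N {k} \<inter> gcd_b_pairs b N {l} = {}" if "k \<noteq> l" for k l
    using that by (auto simp: gcd_b_pairs_def)
  ultimately show ?thesis
    by (simp add: card_UN_disjoint)
qed

lemma card_multiples_atLeastAtMost:
  assumes "m > 0"
  shows "card {r \<in> {1..N}. m dvd r} = N div m"
proof -
  have "{r \<in> {1..N}. m dvd r} = (\<lambda>i. m * i) ` {1..N div m}"
    using assms by (auto simp: less_eq_div_iff_mult_less_eq mult.commute)
  moreover have "inj_on (\<lambda>i. m * i) {1..N div m}"
    using assms by (auto simp: inj_on_def)
  ultimately show ?thesis by (simp add: card_image)
qed

lemma card_gcd_b_pairs_multiples:
  assumes "k > 0"
  shows "card (gcd_b_pairs b N {g. k dvd g}) = (N div k) * (N div k ^ b)"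
proof -
  have "gcd_b_pairs b N {g. k dvd g} = {r \<in> {1..N}. k dvd r} \<times> {s \<in> {1..N}. k ^ b dvd s}"
    by (auto simp: gcd_b_pairs_def dvd_gcd_b_iff)
  moreover have "k ^ b > 0" using assms by simp
  ultimately show ?thesis
    by (simp only: card_cartesian_product card_multiples_atLeastAtMost[OF assms]
        card_multiples_atLeastAtMost[OF \<open>k ^ b > 0\<close>])
qed

lemma card_gcd_b_pairs_singleton_le:
  assumes "k > 0"
  shows "card (gcd_b_pairs b N {k}) \<le> (N div k) * (N div k ^ b)"
proof -
  have "gcd_b_pairs b N {k} \<subseteq> gcd_b_pairs b N {g. k dvd g}"
    by (auto simp: gcd_b_pairs_def)
  then show ?thesis
    using assms by (metis card_gcd_b_pairs_multiples card_mono finite_gcd_b_pairs)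
qed

lemma card_gcd_b_pairs_singleton:
  assumes "k > 0"
  shows "real (card (gcd_b_pairs b N {k}))
    = (\<Sum>j=1..N. moebius_mu j * real (N div (j * k)) * real (N div (j * k) ^ b))"
proof -
  let ?B = "gcd_b_pairs b N UNIV"
  have indicator: "of_bool (gcd_b b r s = k)
      = (\<Sum>j=1..N. moebius_mu j * of_bool (j * k dvd gcd_b b r s))" if "(r, s) \<in> ?B" for r s
    using that gcd_b_pos gcd_b_le[of r b s]
    by (intro sum_moebius_mu_dvd_quotient_atLeastAtMost[symmetric]) (auto simp: gcd_b_pairs_def)
  have "real (card (gcd_b_pairs b N {k})) = (\<Sum>(r, s)\<in>?B. of_bool (gcd_b b r s = k))"
    by (subst gcd_b_pairs_eq_filter) (simp add: case_prod_unfold Int_def)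
  also have "\<dots> = (\<Sum>(r, s)\<in>?B. \<Sum>j=1..N. moebius_mu j * of_bool (j * k dvd gcd_b b r s))"
    using indicator by (intro sum.cong) auto
  also have "\<dots> = (\<Sum>j=1..N. \<Sum>(r, s)\<in>?B. moebius_mu j * of_bool (j * k dvd gcd_b b r s))"
    unfolding case_prod_unfold by (rule sum.swap)
  also have "\<dots> = (\<Sum>j=1..N. moebius_mu j * real (card (gcd_b_pairs b N {g. j * k dvd g})))"
    by (simp add: gcd_b_pairs_eq_filter[of b N "{g. _ dvd g}"] case_prod_unfold Int_def
        flip: sum_distrib_left)
  also have "\<dots> = (\<Sum>j=1..N. moebius_mu j * real (N div (j * k)) * real (N div (j * k) ^ b))"
    using assms by (intro sum.cong refl) (simp add: card_gcd_b_pairs_multiples)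
  finally show ?thesis .
qed

lemma card_gcd_b_pairs_singleton_suminf:
  assumes "k > 0"
  shows "(\<Sum>j. moebius_mu j * (real (N div (j * k)) * real (N div (j * k) ^ b) / real N ^ 2))
    = real (card (gcd_b_pairs b N {k})) / real N ^ 2"
proof -
  let ?a = "\<lambda>j. moebius_mu j * (real (N div (j * k)) * real (N div (j * k) ^ b) / real N ^ 2)"
  have "?a j = 0" if "j \<notin> {1..N}" for j
  proof (cases "j = 0")
    case False
    have "N < j" "j \<le> j * k" using that False assms by auto
    then have "N div (j * k) = 0" by (metis div_less less_le_trans)
    then show ?thesis by simp
  qed (simp add: moebius_mu_def)
  then have "(\<Sum>j. ?a j) = (\<Sum>j=1..N. ?a j)"
    by (intro suminf_finite) auto
  then show ?thesis
    using assms by (simp add: card_gcd_b_pairs_singleton sum_divide_distrib mult.assoc)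
qed

lemma card_gcd_b_pairs_suminf:
  "(\<Sum>k. if k \<in> S then real (card (gcd_b_pairs b N {k})) / real N ^ 2 else 0)
    = real (card (gcd_b_pairs b N S)) / real N ^ 2"
proof -
  let ?a = "\<lambda>k. if k \<in> S then real (card (gcd_b_pairs b N {k})) / real N ^ 2 else 0"
  have "?a k = 0" if "k \<notin> {..N}" for k
    using that card_gcd_b_pairs_singleton_le[of k b N] by simp
  then have "(\<Sum>k. ?a k) = (\<Sum>k\<le>N. ?a k)"
    by (intro suminf_finite) auto
  also have "\<dots> = (\<Sum>k\<in>{..N} \<inter> S. real (card (gcd_b_pairs b N {k})) / real N ^ 2)"
    by (simp add: sum.inter_restrict)
  also have "\<dots> = real (card (gcd_b_pairs b N S)) / real N ^ 2"
    by (simp add: card_gcd_b_pairs_eq_sum[of b N S] sum_divide_distrib Int_commute)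
  finally show ?thesis .
qed

section \<open>Densities\<close>

lemma summable_one_over_power: "2 \<le> m \<Longrightarrow> summable (\<lambda>k. 1 / real k ^ m)"
  using inverse_power_summable[of m, where 'a=real] by (simp add: inverse_eq_divide)

lemma summable_moebius_mu_over_power:
  assumes "2 \<le> m"
  shows "summable (\<lambda>j. moebius_mu j / real j ^ m)"
proof (rule summable_comparison_test'[OF summable_one_over_power[OF assms]])
  show "norm (moebius_mu j / real j ^ m) \<le> 1 / real j ^ m" for j
    using abs_moebius_mu_le[of j] by (simp add: divide_right_mono)
qed

lemma summable_indicator_over_power:
  assumes "2 \<le> m"
  shows "summable (\<lambda>k. of_bool (k \<in> S) / real k ^ m)"
proof (rule summable_comparison_test'[OF summable_one_over_power[OF assms]])
  show "norm (of_bool (k \<in> S) / real k ^ m) \<le> 1 / real k ^ m" for k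
    by simp
qed

lemma zeta_S_eq_suminf:
  assumes "2 \<le> m"
  shows "zeta_S S m = (\<Sum>k. of_bool (k \<in> S) / real k ^ m)"
proof -
  have "(\<lambda>k. of_bool (k \<in> S) / real k ^ m) sums (\<Sum>k. of_bool (k \<in> S) / real k ^ m)"
    using assms by (intro summable_sums summable_indicator_over_power)
  then have "((\<lambda>k. of_bool (k \<in> S) / real k ^ m) has_sum (\<Sum>k. of_bool (k \<in> S) / real k ^ m)) UNIV"
    by (rule sums_nonneg_imp_has_sum) simp
  moreover have "zeta_S S m = infsum (\<lambda>k. of_bool (k \<in> S) / real k ^ m) UNIV"
    unfolding zeta_S_def by (rule infsum_cong_neutral) auto
  ultimately show ?thesis by (simp add: infsumI)
qed

lemma suminf_scaled_indicator_eq_zeta_S: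
  assumes "2 \<le> m"
  shows "(\<Sum>k. if k \<in> S then c / real k ^ m else 0) = c * zeta_S S m"
proof -
  have "(\<lambda>k. if k \<in> S then c / real k ^ m else 0) = (\<lambda>k. c * (of_bool (k \<in> S) / real k ^ m))"
    by auto
  then show ?thesis
    using suminf_mult[OF summable_indicator_over_power[OF assms], of c]
    by (simp add: zeta_S_eq_suminf[OF assms])
qed

lemma zeta_nat_eq_suminf: "2 \<le> m \<Longrightarrow> zeta_nat m = (\<Sum>k. 1 / real k ^ m)"
  unfolding zeta_nat_def using suminf_split_head[OF summable_one_over_power] by simp

lemma zeta_S_UNIV: "2 \<le> m \<Longrightarrow> zeta_S UNIV m = zeta_nat m"
  by (simp add: zeta_S_eq_suminf zeta_nat_eq_suminf)

lemma real_nat_div_ge: "real N / real m - 1 \<le> real (N div m)"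
proof -
  have "real (N div m) = of_int \<lfloor>real N / real m\<rfloor>"
    by (simp add: floor_divide_of_nat_eq)
  then show ?thesis by linarith
qed

lemma tendsto_nat_div_over: "(\<lambda>N. real (N div m) / real N) \<longlonglongrightarrow> 1 / real m"
proof (rule tendsto_sandwich[of "\<lambda>N. 1 / real m - 1 / real N" _ _ "\<lambda>N. 1 / real m"])
  have "1 / real m - 1 / real N \<le> real (N div m) / real N" if "N > 0" for N
    using divide_right_mono[OF real_nat_div_ge[of N m], of "real N"] that
    by (simp add: diff_divide_distrib)
  then show "\<forall>\<^sub>F N in sequentially. 1 / real m - 1 / real N \<le> real (N div m) / real N"
    by (intro eventually_sequentiallyI[of 1]) auto
  have "real (N div m) / real N \<le> 1 / real m" for N
    using divide_right_mono[OF of_nat_div_le_of_nat[of N m], of "real N"] by (cases "N = 0") auto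
  then show "\<forall>\<^sub>F N in sequentially. real (N div m) / real N \<le> 1 / real m"
    by simp
  show "(\<lambda>N. 1 / real m - 1 / real N) \<longlonglongrightarrow> 1 / real m"
    using tendsto_diff[OF tendsto_const lim_1_over_n] by simp
qed simp

lemma tendsto_multiples_density:
  "(\<lambda>N. real (N div k) * real (N div k ^ b) / real N ^ 2) \<longlonglongrightarrow> 1 / real k ^ (b + 1)"
proof -
  have "(\<lambda>N. real (N div k) / real N * (real (N div k ^ b) / real N))
      \<longlonglongrightarrow> 1 / real k * (1 / real (k ^ b))"
    by (intro tendsto_mult tendsto_nat_div_over)
  then show ?thesis by (simp add: power2_eq_square)
qed

lemma multiples_density_le:
  "real (N div k) * real (N div k ^ b) / real N ^ 2 \<le> 1 / real k ^ (b + 1)"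
proof -
  have "real (N div k) * real (N div k ^ b) \<le> real N / real k * (real N / real (k ^ b))"
    by (intro mult_mono of_nat_div_le_of_nat) auto
  also have "\<dots> = real N ^ 2 / real k ^ (b + 1)"
    by (simp add: power2_eq_square)
  finally have "real (N div k) * real (N div k ^ b) / real N ^ 2
      \<le> real N ^ 2 / real k ^ (b + 1) / real N ^ 2"
    by (rule divide_right_mono) simp
  also have "\<dots> \<le> 1 / real k ^ (b + 1)"
    by (cases "N = 0") auto
  finally show ?thesis .
qed

lemma card_gcd_b_pairs_singleton_density_le:
  "real (card (gcd_b_pairs b N {k})) / real N ^ 2 \<le> 1 / real k ^ (b + 1)"
proof (cases "k = 0")
  case True
  then show ?thesis by (simp add: gcd_b_pairs_0)
next
  case False
  then have "real (card (gcd_b_pairs b N {k})) \<le> real (N div k) * real (N div k ^ b)"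
    using card_gcd_b_pairs_singleton_le[of k b N] by (simp flip: of_nat_mult)
  then have "real (card (gcd_b_pairs b N {k})) / real N ^ 2
      \<le> real (N div k) * real (N div k ^ b) / real N ^ 2"
    by (rule divide_right_mono) simp
  then show ?thesis by (rule order_trans[OF _ multiples_density_le])
qed

lemma one_over_power_mult_le:
  assumes "k > 0"
  shows "1 / real (j * k) ^ m \<le> 1 / real j ^ m"
proof (cases "j = 0")
  case False
  then have "real j ^ m \<le> real (j * k) ^ m"
    using assms by (intro power_mono) auto
  then show ?thesis
    using False assms by (intro divide_left_mono) auto
qed simp

lemma tendsto_suminf_dominated:
  fixes a :: "nat \<Rightarrow> nat \<Rightarrow> real"
  assumes "\<And>k. (\<lambda>n. a k n) \<longlonglongrightarrow> c k"
    and "\<And>k n. \<bar>a k n\<bar> \<le> M k"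
    and "summable M"
  shows "(\<lambda>n. \<Sum>k. a k n) \<longlonglongrightarrow> (\<Sum>k. c k)"
proof -
  have "\<forall>\<^sub>F (k, n) in at_top \<times>\<^sub>F sequentially. norm (a k n) \<le> M k"
    using assms(2) by (intro always_eventually) auto
  from tannerys_theorem[OF assms(1) this assms(3) trivial_limit_sequentially] show ?thesis
    by blast
qed

lemma tendsto_density_gcd_b_singleton:
  assumes "b \<ge> 1" "k > 0"
  shows "(\<lambda>N. real (card (gcd_b_pairs b N {k})) / real N ^ 2)
    \<longlonglongrightarrow> (\<Sum>j. moebius_mu j / real j ^ (b + 1)) / real k ^ (b + 1)"
proof -
  define a where
    "a j N = moebius_mu j * (real (N div (j * k)) * real (N div (j * k) ^ b) / real N ^ 2)" for j N
  have summable: "summable (\<lambda>j. moebius_mu j / real j ^ (b + 1))"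
    using assms(1) by (intro summable_moebius_mu_over_power) simp
  have lim: "(\<lambda>N. a j N) \<longlonglongrightarrow> moebius_mu j / real j ^ (b + 1) / real k ^ (b + 1)" for j
  proof -
    have "(\<lambda>N. a j N) \<longlonglongrightarrow> moebius_mu j * (1 / real (j * k) ^ (b + 1))"
      unfolding a_def by (intro tendsto_mult tendsto_const tendsto_multiples_density)
    then show ?thesis by (simp add: power_mult_distrib mult_ac)
  qed
  have bound: "\<bar>a j N\<bar> \<le> 1 / real j ^ (b + 1)" for j N
  proof -
    have "\<bar>a j N\<bar> \<le> 1 * (1 / real (j * k) ^ (b + 1))"
      unfolding a_def abs_mult using multiples_density_le[of N "j * k" b]
      by (intro mult_mono abs_moebius_mu_le) auto
    then show ?thesis
      using one_over_power_mult_le[OF assms(2), of j "b + 1"] by simp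
  qed
  have sum: "(\<Sum>j. a j N) = real (card (gcd_b_pairs b N {k})) / real N ^ 2" for N
    unfolding a_def using assms(2) by (rule card_gcd_b_pairs_singleton_suminf)
  have "(\<lambda>N. \<Sum>j. a j N) \<longlonglongrightarrow> (\<Sum>j. moebius_mu j / real j ^ (b + 1) / real k ^ (b + 1))"
    using assms(1) by (intro tendsto_suminf_dominated[OF lim bound] summable_one_over_power) simp
  then show ?thesis
    unfolding sum suminf_divide[OF summable] .
qed

lemma tendsto_density_gcd_b:
  assumes "b \<ge> 1"
  shows "(\<lambda>N. real (card (gcd_b_pairs b N S)) / real N ^ 2)
    \<longlonglongrightarrow> (\<Sum>j. moebius_mu j / real j ^ (b + 1)) * zeta_S S (b + 1)"
proof -
  define L where "L = (\<Sum>j. moebius_mu j / real j ^ (b + 1))"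
  define a where "a k N = (if k \<in> S then real (card (gcd_b_pairs b N {k})) / real N ^ 2 else 0)"
    for k N
  have lim: "(\<lambda>N. a k N) \<longlonglongrightarrow> (if k \<in> S then L / real k ^ (b + 1) else 0)" for k
  proof (cases "k = 0")
    case True
    then show ?thesis by (simp add: a_def gcd_b_pairs_0)
  next
    case False
    then show ?thesis
      unfolding a_def L_def using assms tendsto_density_gcd_b_singleton by simp
  qed
  have bound: "\<bar>a k N\<bar> \<le> 1 / real k ^ (b + 1)" for k N
    using card_gcd_b_pairs_singleton_density_le[of b N k] by (simp add: a_def)
  have sum: "(\<Sum>k. a k N) = real (card (gcd_b_pairs b N S)) / real N ^ 2" for N
    unfolding a_def by (rule card_gcd_b_pairs_suminf)
  have "(\<lambda>N. \<Sum>k. a k N) \<longlonglongrightarrow> (\<Sum>k. if k \<in> S then L / real k ^ (b + 1) else 0)"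
    using assms by (intro tendsto_suminf_dominated[OF lim bound] summable_one_over_power) simp
  moreover have "(\<Sum>k. if k \<in> S then L / real k ^ (b + 1) else 0) = L * zeta_S S (b + 1)"
    using assms by (intro suminf_scaled_indicator_eq_zeta_S) simp
  ultimately show ?thesis
    unfolding sum L_def by simp
qed

theorem mainTheorem5:
  fixes b :: nat and S :: "nat set"
  assumes "b \<ge> 1"
  shows "(\<lambda>N::nat. real (card {(r, s). 0 < r \<and> r \<le> N \<and> 0 < s \<and> s \<le> N \<and> gcd_b b r s \<in> S})
            / real N ^ 2)
         \<longlonglongrightarrow> zeta_S S (b + 1) / zeta_nat (b + 1)"
proof -
  define L where "L = (\<Sum>j. moebius_mu j / real j ^ (b + 1))"
  have density: "(\<lambda>N. real (card (gcd_b_pairs b N A)) / real N ^ 2) \<longlonglongrightarrow> L * zeta_S A (b + 1)"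
    for A
    using tendsto_density_gcd_b[OF assms] by (simp add: L_def)
  have "(\<lambda>N. real (card (gcd_b_pairs b N UNIV)) / real N ^ 2) \<longlonglongrightarrow> 1"
    by (rule Lim_transform_eventually[OF tendsto_const], rule eventually_sequentiallyI[of 1])
      (simp add: card_gcd_b_pairs_UNIV)
  with density[of UNIV] have "L * zeta_S UNIV (b + 1) = 1"
    by (rule LIMSEQ_unique)
  then have "L = 1 / zeta_nat (b + 1)"
    using assms by (auto simp: zeta_S_UNIV eq_divide_eq)
  then show ?thesis
    using density[of S] by (simp add: gcd_b_pairs_def)
qed

end
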